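(* Let $G$ be a simple undirected graph on $\{1,\dots,n\}$ with adjacency $g_{ij}$ and degrees $d_i$. Let the exposure be binary, $e_i=I\big(\sum_jg_{ij}z_j>0\big)$, and suppose $Y_i(z_i,e_i)=\alpha_i+\beta_iz_i+\gamma_ie_i+\theta_iz_ie_i$. Under a completely randomized design with $n_t$ treated and $n_c=n-n_t$ control units, $1\le n_t\le n-1$, the estimator $$\hat\beta_{naive}=\frac{\sum_i Y_i^{obs}Z_i}{\sum_i Z_i}-\frac{\sum_i Y_i^{obs}(1-Z_i)}{\sum_i(1-Z_i)}$$ satisfies, with $\mathrm{DTE}=\frac1n\sum_i\big(Y_i(1,0)-Y_i(0,0)\big)$, $$\mathbb E[\hat\beta_{naive}]-\mathrm{DTE}=-\frac1n\sum_i\gamma_i\frac{\binom{n_c-1}{d_i-1}}{\binom{n-1}{d_i}}+\frac1n\sum_i\theta_i\left(1-\frac{\binom{n_c}{d_i}}{\binom{n-1}{d_i}}\right).$$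
   Context: Completely randomized design: $\mathbf Z$ is uniform over vectors in $\{0,1\}^n$ with exactly $n_t$ ones. $E_i=I(\sum_jg_{ij}Z_j>0)$, $Y_i^{obs}=Y_i(Z_i,E_i)$. Binomial coefficients follow the convention $\binom ab=0$ if $b<0$ or $b>a$. *)

theory Defs
  imports "HOL-Probability.Probability"
begin

definition ibinom :: "int \<Rightarrow> int \<Rightarrow> real" where
  "ibinom a b = (if b < 0 \<or> b > a then 0 else real (nat a choose nat b))"

definition simple_graph :: "nat \<Rightarrow> (nat \<Rightarrow> nat \<Rightarrow> bool) \<Rightarrow> bool" where
  "simple_graph n g \<longleftrightarrow> (\<forall>i<n. \<forall>j<n. g i j = g j i) \<and> (\<forall>i<n. \<not> g i i)"

definition degree :: "nat \<Rightarrow> (nat \<Rightarrow> nat \<Rightarrow> bool) \<Rightarrow> nat \<Rightarrow> nat" where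
  "degree n g i = card {j. j < n \<and> g i j}"

text \<open>Completely randomized design: the set of treated units is uniform over subsets
  of {0..<n} of size nt (Z_j = 1 iff j is in the set).\<close>
definition crd :: "nat \<Rightarrow> nat \<Rightarrow> nat set pmf" where
  "crd n nt = pmf_of_set {S. S \<subseteq> {..<n} \<and> card S = nt}"

definition Zind :: "nat set \<Rightarrow> nat \<Rightarrow> real" where
  "Zind S j = (if j \<in> S then 1 else 0)"

definition expo :: "nat \<Rightarrow> (nat \<Rightarrow> nat \<Rightarrow> bool) \<Rightarrow> nat set \<Rightarrow> nat \<Rightarrow> real" where
  "expo n g S i = (if (\<Sum>j<n. (if g i j then 1 else 0) * Zind S j) > (0::real) then 1 else 0)"

definition Ypot :: "(nat \<Rightarrow> real) \<Rightarrow> (nat \<Rightarrow> real) \<Rightarrow> (nat \<Rightarrow> real) \<Rightarrow> (nat \<Rightarrow> real)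
    \<Rightarrow> nat \<Rightarrow> real \<Rightarrow> real \<Rightarrow> real" where
  "Ypot \<alpha> \<beta> \<gamma> \<theta> i z e = \<alpha> i + \<beta> i * z + \<gamma> i * e + \<theta> i * z * e"

definition Yobs where
  "Yobs n g \<alpha> \<beta> \<gamma> \<theta> S i = Ypot \<alpha> \<beta> \<gamma> \<theta> i (Zind S i) (expo n g S i)"

definition beta_naive where
  "beta_naive n g \<alpha> \<beta> \<gamma> \<theta> S =
     (\<Sum>i<n. Yobs n g \<alpha> \<beta> \<gamma> \<theta> S i * Zind S i) / (\<Sum>i<n. Zind S i)
   - (\<Sum>i<n. Yobs n g \<alpha> \<beta> \<gamma> \<theta> S i * (1 - Zind S i)) / (\<Sum>i<n. 1 - Zind S i)"

definition DTE where
  "DTE n \<alpha> \<beta> \<gamma> \<theta> = (1 / real n) * (\<Sum>i<n. Ypot \<alpha> \<beta> \<gamma> \<theta> i 1 0 - Ypot \<alpha> \<beta> \<gamma> \<theta> i 0 0)"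

end

theory Submission
  imports Defs
begin

text \<open>Write A(C) for the indicator that no unit of C is treated. Then Z_i = 1 - A({i}) and
  E_i = 1 - A(N_i) for the neighbourhood N_i of i, so Y_i Z_i and Y_i (1 - Z_i) are linear
  combinations of A({i}), A(N_i) and A(N_i + i), and under the design
  E A(C) = C(n - |C|, n_t) / C(n, n_t). Since exactly n_t units are treated, the denominators of
  the estimator are constant and its expectation is a sum of such terms. The double-counting
  identity C(m - d, k) C(m, d) = C(m - k, d) C(m, k) turns these ratios into the ratios over
  C(n - 1, d_i) of the statement.\<close>

lemma choose_diff_mult_choose:
  "((m::nat) - d choose k) * (m choose d) = (m - k choose d) * (m choose k)"
proof (cases "d + k \<le> m")
  case True
  have "(m choose (d + k)) * ((d + k) choose d) = (m choose d) * ((m - d) choose k)"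
    using choose_mult[of d "d + k" m] True by simp
  moreover have "(m choose (d + k)) * ((d + k) choose k) = (m choose k) * ((m - k) choose d)"
    using choose_mult[of k "d + k" m] True by simp
  moreover have "(d + k) choose d = (d + k) choose k"
    using binomial_symmetric[of d "d + k"] by simp
  ultimately show ?thesis by (simp add: mult.commute)
next
  case False
  then show ?thesis by (cases "d \<le> m"; cases "k \<le> m") (auto simp: binomial_eq_0)
qed

lemma choose_diff_div_choose_swap:
  assumes "d \<le> m" "k \<le> m"
  shows "real (m - d choose k) / real (m choose k) = real (m - k choose d) / real (m choose d)"
  using choose_diff_mult_choose[of m d k] assms
  by (simp add: field_simps flip: of_nat_mult)

lemma choose_Suc_diff_div_choose:
  assumes "k < m" "d < m"
  shows "real (m - Suc d choose k) / real (m choose k)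
    = real (m - k) / real m * (real (m - 1 - k choose d) / real (m - 1 choose d))"
proof -
  have "real (m - k) * real (m choose k) = real m * real (m - 1 choose k)"
    using binomial_absorb_comp[of m k] by (simp flip: of_nat_mult)
  then have absorb: "real (m - 1 choose k) / real (m choose k) = real (m - k) / real m"
    using assms by (simp add: field_simps)
  have "real (m - Suc d choose k) / real (m choose k)
      = real (m - 1 - d choose k) / real (m - 1 choose k) * (real (m - 1 choose k) / real (m choose k))"
    using assms by simp
  also have "\<dots> = real (m - 1 - k choose d) / real (m - 1 choose d) * (real (m - k) / real m)"
    using assms by (simp only: absorb choose_diff_div_choose_swap)
  finally show ?thesis by (simp add: mult.commute)
qed

lemma choose_Suc_diff_pred_div_choose:
  assumes "0 < k" "k \<le> m" "d < m"
  shows "real (m - Suc d choose (k - 1)) / real (m choose k)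
    = real k / real m * (real (m - k choose d) / real (m - 1 choose d))"
proof -
  have "real k * real (m choose k) = real m * real (m - 1 choose (k - 1))"
    using times_binomial_minus1_eq[of k m] assms by (simp flip: of_nat_mult)
  then have absorb: "real (m - 1 choose (k - 1)) / real (m choose k) = real k / real m"
    using assms by (simp add: field_simps)
  have "real (m - Suc d choose (k - 1)) / real (m choose k)
      = real (m - 1 - d choose (k - 1)) / real (m - 1 choose (k - 1))
        * (real (m - 1 choose (k - 1)) / real (m choose k))"
    using assms by simp
  also have "\<dots> = real (m - 1 - (k - 1) choose d) / real (m - 1 choose d) * (real k / real m)"
    using assms by (simp only: absorb choose_diff_div_choose_swap)
  also have "m - 1 - (k - 1) = m - k" using assms by simp
  finally show ?thesis by (simp add: mult.commute)
qed

definition nbhd :: "nat \<Rightarrow> (nat \<Rightarrow> nat \<Rightarrow> bool) \<Rightarrow> nat \<Rightarrow> nat set" where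
  "nbhd n g i = {j. j < n \<and> g i j}"

definition avoids :: "nat set \<Rightarrow> nat set \<Rightarrow> real" where
  "avoids C = indicator {S. S \<inter> C = {}}"

lemma degree_eq_card_nbhd: "degree n g i = card (nbhd n g i)"
  unfolding degree_def nbhd_def ..

lemma nbhd_subset: "nbhd n g i \<subseteq> {..<n}"
  unfolding nbhd_def by auto

lemma card_insert_nbhd: "\<not> g i i \<Longrightarrow> card (insert i (nbhd n g i)) = Suc (degree n g i)"
  by (simp add: degree_eq_card_nbhd nbhd_def)

lemma degree_less:
  assumes "\<not> g i i" "i < n"
  shows "degree n g i < n"
proof -
  have "card (insert i (nbhd n g i)) \<le> n"
    using card_mono[of "{..<n}" "insert i (nbhd n g i)"] nbhd_subset assms(2) by auto
  then show ?thesis using card_insert_nbhd[of g i n] assms(1) by simp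
qed

lemma crd_support_nonempty:
  fixes n nt :: nat
  assumes "nt \<le> n"
  shows "{S. S \<subseteq> {..<n} \<and> card S = nt} \<noteq> {}"
proof -
  have "{..<nt} \<in> {S. S \<subseteq> {..<n} \<and> card S = nt}" using assms by auto
  then show ?thesis by blast
qed

lemma finite_crd_support: "finite {S. S \<subseteq> {..<n::nat} \<and> card S = nt}"
  by (rule finite_subset[of _ "Pow {..<n}"]) auto

lemma set_pmf_crd: "nt \<le> n \<Longrightarrow> set_pmf (crd n nt) = {S. S \<subseteq> {..<n} \<and> card S = nt}"
  unfolding crd_def by (intro set_pmf_of_set crd_support_nonempty finite_crd_support)

lemma integrable_crd: "nt \<le> n \<Longrightarrow> integrable (measure_pmf (crd n nt)) (f :: nat set \<Rightarrow> real)"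
  by (intro integrable_measure_pmf_finite) (simp add: set_pmf_crd)

lemma expectation_avoids:
  assumes "C \<subseteq> {..<n}" "nt \<le> n"
  shows "measure_pmf.expectation (crd n nt) (avoids C) = real (n - card C choose nt) / real (n choose nt)"
proof -
  have "{S. S \<subseteq> {..<n} \<and> card S = nt} \<inter> {S. S \<inter> C = {}} = {S. S \<subseteq> {..<n} - C \<and> card S = nt}"
    by auto
  moreover have "card ({..<n} - C) = n - card C"
    using assms by (simp add: card_Diff_subset finite_subset)
  ultimately show ?thesis
    unfolding avoids_def crd_def
    by (simp add: measure_pmf_of_set[OF crd_support_nonempty[OF assms(2)] finite_crd_support] n_subsets)
qed

lemma Zind_eq_avoids: "Zind S i = 1 - avoids {i} S"
  unfolding Zind_def avoids_def by auto

lemma expo_eq_avoids: "expo n g S i = 1 - avoids (nbhd n g i) S"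
proof -
  have "(\<Sum>j<n. (if g i j then 1 else 0) * Zind S j) = (\<Sum>j<n. of_bool (j \<in> nbhd n g i \<inter> S) :: real)"
    unfolding Zind_def nbhd_def by (intro sum.cong) auto
  also have "\<dots> = real (card (nbhd n g i \<inter> S))"
    by (subst sum_of_bool_eq) (auto simp: nbhd_def intro: arg_cong[where f = card])
  finally show ?thesis
    unfolding expo_def avoids_def by (auto simp: nbhd_def split: split_indicator)
qed

lemma Yobs_mult_Zind:
  "Yobs n g \<alpha> \<beta> \<gamma> \<theta> S i * Zind S i
    = (\<alpha> i + \<beta> i + \<gamma> i + \<theta> i) * (1 - avoids {i} S)
      - (\<gamma> i + \<theta> i) * (avoids (nbhd n g i) S - avoids (insert i (nbhd n g i)) S)"
  unfolding Yobs_def Ypot_def Zind_eq_avoids expo_eq_avoids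
  by (auto simp: avoids_def algebra_simps split: split_indicator)

lemma Yobs_mult_one_minus_Zind:
  "Yobs n g \<alpha> \<beta> \<gamma> \<theta> S i * (1 - Zind S i)
    = (\<alpha> i + \<gamma> i) * avoids {i} S - \<gamma> i * avoids (insert i (nbhd n g i)) S"
  unfolding Yobs_def Ypot_def Zind_eq_avoids expo_eq_avoids
  by (auto simp: avoids_def algebra_simps split: split_indicator)

lemma sum_Zind: "S \<subseteq> {..<n} \<Longrightarrow> (\<Sum>i<n. Zind S i) = real (card S)"
  unfolding Zind_def by (simp add: sum.If_cases Int_absorb1)

lemma expectation_beta_naive:
  assumes "nt \<le> n"
  shows "measure_pmf.expectation (crd n nt) (beta_naive n g \<alpha> \<beta> \<gamma> \<theta>)
    = (\<Sum>i<n. measure_pmf.expectation (crd n nt) (\<lambda>S. Yobs n g \<alpha> \<beta> \<gamma> \<theta> S i * Zind S i)) / real nt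
      - (\<Sum>i<n. measure_pmf.expectation (crd n nt) (\<lambda>S. Yobs n g \<alpha> \<beta> \<gamma> \<theta> S i * (1 - Zind S i)))
        / real (n - nt)"
proof -
  have "beta_naive n g \<alpha> \<beta> \<gamma> \<theta> S
      = (\<Sum>i<n. Yobs n g \<alpha> \<beta> \<gamma> \<theta> S i * Zind S i) / real nt
        - (\<Sum>i<n. Yobs n g \<alpha> \<beta> \<gamma> \<theta> S i * (1 - Zind S i)) / real (n - nt)"
    if "S \<in> set_pmf (crd n nt)" for S
    using that assms unfolding beta_naive_def
    by (simp add: set_pmf_crd sum_Zind sum_subtractf of_nat_diff)
  then have "measure_pmf.expectation (crd n nt) (beta_naive n g \<alpha> \<beta> \<gamma> \<theta>)
      = measure_pmf.expectation (crd n nt) (\<lambda>S. (\<Sum>i<n. Yobs n g \<alpha> \<beta> \<gamma> \<theta> S i * Zind S i) / real nt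
        - (\<Sum>i<n. Yobs n g \<alpha> \<beta> \<gamma> \<theta> S i * (1 - Zind S i)) / real (n - nt))"
    by (intro integral_cong_AE AE_pmfI) simp_all
  then show ?thesis
    using assms by (simp add: integrable_crd)
qed

lemma expectation_avoids_singleton:
  assumes "i < n" "nt < n"
  shows "measure_pmf.expectation (crd n nt) (avoids {i}) = real (n - nt) / real n"
  using assms expectation_avoids[of "{i}" n nt] choose_Suc_diff_div_choose[of nt n 0] by simp

lemma expectation_avoids_closed_nbhd:
  assumes "\<not> g i i" "i < n" "nt < n"
  shows "measure_pmf.expectation (crd n nt) (avoids (insert i (nbhd n g i)))
    = real (n - nt) / real n * (real (n - nt - 1 choose degree n g i) / real (n - 1 choose degree n g i))"
  using assms expectation_avoids[of "insert i (nbhd n g i)" n nt] nbhd_subset[of n g i]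
    choose_Suc_diff_div_choose[of nt n "degree n g i"]
  by (simp add: card_insert_nbhd degree_less diff_commute[of n 1])

(* the probability that unit i is treated but not exposed *)
lemma expectation_avoids_nbhd_diff:
  assumes "\<not> g i i" "i < n" "0 < nt" "nt < n"
  shows "measure_pmf.expectation (crd n nt) (avoids (nbhd n g i))
      - measure_pmf.expectation (crd n nt) (avoids (insert i (nbhd n g i)))
    = real nt / real n * (real (n - nt choose degree n g i) / real (n - 1 choose degree n g i))"
proof -
  define d where "d = degree n g i"
  have "d < n" unfolding d_def using assms(1,2) by (rule degree_less)
  then have pascal: "n - d choose nt = (n - Suc d choose (nt - 1)) + (n - Suc d choose nt)"
    using choose_reduce_nat[of "n - d" nt] assms(3) by (simp add: Suc_diff_Suc)
  have "measure_pmf.expectation (crd n nt) (avoids (nbhd n g i))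
      - measure_pmf.expectation (crd n nt) (avoids (insert i (nbhd n g i)))
      = (real (n - d choose nt) - real (n - Suc d choose nt)) / real (n choose nt)"
    using assms nbhd_subset[of n g i] expectation_avoids[of _ n nt]
    by (simp add: card_insert_nbhd d_def degree_eq_card_nbhd diff_divide_distrib)
  also have "\<dots> = real (n - Suc d choose (nt - 1)) / real (n choose nt)"
    by (simp add: pascal)
  finally show ?thesis
    using choose_Suc_diff_pred_div_choose[of nt n d] assms \<open>d < n\<close> by (simp add: d_def)
qed

lemma expectation_Yobs_treated:
  assumes "\<not> g i i" "i < n" "0 < nt" "nt < n"
  shows "measure_pmf.expectation (crd n nt) (\<lambda>S. Yobs n g \<alpha> \<beta> \<gamma> \<theta> S i * Zind S i)
    = real nt / real n * (\<alpha> i + \<beta> i + \<gamma> i + \<theta> i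
        - (\<gamma> i + \<theta> i) * (real (n - nt choose degree n g i) / real (n - 1 choose degree n g i)))"
    (is "_ = ?p * (_ - _ * ?r)")
proof -
  have "measure_pmf.expectation (crd n nt) (\<lambda>S. Yobs n g \<alpha> \<beta> \<gamma> \<theta> S i * Zind S i)
      = (\<alpha> i + \<beta> i + \<gamma> i + \<theta> i) * (1 - measure_pmf.expectation (crd n nt) (avoids {i}))
        - (\<gamma> i + \<theta> i) * (measure_pmf.expectation (crd n nt) (avoids (nbhd n g i))
          - measure_pmf.expectation (crd n nt) (avoids (insert i (nbhd n g i))))"
    unfolding Yobs_mult_Zind using assms(4) by (simp add: integrable_crd)
  also have "1 - measure_pmf.expectation (crd n nt) (avoids {i}) = ?p"
    using assms by (simp add: expectation_avoids_singleton field_simps of_nat_diff)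
  also have "measure_pmf.expectation (crd n nt) (avoids (nbhd n g i))
      - measure_pmf.expectation (crd n nt) (avoids (insert i (nbhd n g i))) = ?p * ?r"
    using assms by (rule expectation_avoids_nbhd_diff)
  finally show ?thesis by (simp only: right_diff_distrib mult_ac)
qed

lemma expectation_Yobs_control:
  assumes "\<not> g i i" "i < n" "nt < n"
  shows "measure_pmf.expectation (crd n nt) (\<lambda>S. Yobs n g \<alpha> \<beta> \<gamma> \<theta> S i * (1 - Zind S i))
    = real (n - nt) / real n * (\<alpha> i + \<gamma> i
        - \<gamma> i * (real (n - nt - 1 choose degree n g i) / real (n - 1 choose degree n g i)))"
    (is "_ = ?p * (_ - _ * ?r)")
proof -
  have "measure_pmf.expectation (crd n nt) (\<lambda>S. Yobs n g \<alpha> \<beta> \<gamma> \<theta> S i * (1 - Zind S i))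
      = (\<alpha> i + \<gamma> i) * measure_pmf.expectation (crd n nt) (avoids {i})
        - \<gamma> i * measure_pmf.expectation (crd n nt) (avoids (insert i (nbhd n g i)))"
    unfolding Yobs_mult_one_minus_Zind using assms(3) by (simp add: integrable_crd)
  also have "measure_pmf.expectation (crd n nt) (avoids {i}) = ?p"
    using assms(2,3) by (rule expectation_avoids_singleton)
  also have "measure_pmf.expectation (crd n nt) (avoids (insert i (nbhd n g i))) = ?p * ?r"
    using assms by (rule expectation_avoids_closed_nbhd)
  finally show ?thesis by (simp only: right_diff_distrib mult_ac)
qed

lemma ibinom_of_nat: "ibinom (int a) (int b) = real (a choose b)"
  unfolding ibinom_def by (simp add: binomial_eq_0)

lemma ibinom_pred_pred:
  assumes "0 < a"
  shows "ibinom (int a - 1) (int b - 1) = real (a choose b) - real (a - 1 choose b)"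
proof (cases "b = 0")
  case True
  then show ?thesis unfolding ibinom_def by simp
next
  case False
  then have "ibinom (int a - 1) (int b - 1) = real (a - 1 choose (b - 1))"
    using assms ibinom_of_nat[of "a - 1" "b - 1"] by (simp add: of_nat_diff)
  then show ?thesis
    using choose_reduce_nat[of a b] assms False by simp
qed

lemma DTE_eq: "DTE n \<alpha> \<beta> \<gamma> \<theta> = (\<Sum>i<n. \<beta> i) / real n"
  unfolding DTE_def Ypot_def by simp

lemma unit_bias:
  assumes "\<not> g i i" "i < n" "0 < nt" "nt < n"
  shows "measure_pmf.expectation (crd n nt) (\<lambda>S. Yobs n g \<alpha> \<beta> \<gamma> \<theta> S i * Zind S i) / real nt
      - measure_pmf.expectation (crd n nt) (\<lambda>S. Yobs n g \<alpha> \<beta> \<gamma> \<theta> S i * (1 - Zind S i)) / real (n - nt)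
      - \<beta> i / real n
    = - (1 / real n) * (\<gamma> i * ibinom (int (n - nt) - 1) (int (degree n g i) - 1)
                                    / ibinom (int n - 1) (int (degree n g i)))
      + (1 / real n) * (\<theta> i * (1 - ibinom (int (n - nt)) (int (degree n g i))
                                    / ibinom (int n - 1) (int (degree n g i))))"
proof -
  define d where "d = degree n g i"
  have "int n - 1 = int (n - 1)" using assms by simp
  then have binom_n: "ibinom (int n - 1) (int d) = real (n - 1 choose d)"
    by (simp only: ibinom_of_nat)
  have binom_nc: "ibinom (int (n - nt) - 1) (int d - 1) = real (n - nt choose d) - real (n - nt - 1 choose d)"
    using assms by (intro ibinom_pred_pred) simp
  have "real (n - 1 choose d) > 0"
    using degree_less[of g i n] assms unfolding d_def by simp
  moreover have "real nt > 0" "real (n - nt) > 0" "real n > 0" using assms by auto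
  ultimately show ?thesis
    unfolding expectation_Yobs_treated[where g = g and i = i, OF assms]
      expectation_Yobs_control[where g = g and i = i, OF assms(1,2,4)]
      d_def[symmetric] binom_n binom_nc ibinom_of_nat
    by (simp add: field_simps)
qed

theorem proposition14:
  fixes n nt :: nat and g :: "nat \<Rightarrow> nat \<Rightarrow> bool"
    and \<alpha> \<beta> \<gamma> \<theta> :: "nat \<Rightarrow> real"
  assumes "simple_graph n g"
    and "1 \<le> nt" and "nt \<le> n - 1"
  shows "measure_pmf.expectation (crd n nt) (beta_naive n g \<alpha> \<beta> \<gamma> \<theta>) - DTE n \<alpha> \<beta> \<gamma> \<theta>
    = - (1 / real n) * (\<Sum>i<n. \<gamma> i * ibinom (int (n - nt) - 1) (int (degree n g i) - 1)
                                      / ibinom (int n - 1) (int (degree n g i)))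
      + (1 / real n) * (\<Sum>i<n. \<theta> i * (1 - ibinom (int (n - nt)) (int (degree n g i))
                                      / ibinom (int n - 1) (int (degree n g i))))"
proof -
  have nt: "0 < nt" "nt < n" using assms(2,3) by auto
  have loopless: "\<not> g i i" if "i < n" for i
    using assms(1) that unfolding simple_graph_def by blast
  have "measure_pmf.expectation (crd n nt) (beta_naive n g \<alpha> \<beta> \<gamma> \<theta>) - DTE n \<alpha> \<beta> \<gamma> \<theta>
      = (\<Sum>i<n. measure_pmf.expectation (crd n nt) (\<lambda>S. Yobs n g \<alpha> \<beta> \<gamma> \<theta> S i * Zind S i) / real nt
          - measure_pmf.expectation (crd n nt) (\<lambda>S. Yobs n g \<alpha> \<beta> \<gamma> \<theta> S i * (1 - Zind S i)) / real (n - nt)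
          - \<beta> i / real n)"
    using nt by (simp add: expectation_beta_naive DTE_eq sum_subtractf sum_divide_distrib)
  also have "\<dots> = (\<Sum>i<n. - (1 / real n) * (\<gamma> i * ibinom (int (n - nt) - 1) (int (degree n g i) - 1)
                                    / ibinom (int n - 1) (int (degree n g i)))
      + (1 / real n) * (\<theta> i * (1 - ibinom (int (n - nt)) (int (degree n g i))
                                    / ibinom (int n - 1) (int (degree n g i)))))"
    using nt loopless by (intro sum.cong refl unit_bias) auto
  finally show ?thesis
    by (simp only: sum.distrib sum_distrib_left)
qed

end
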